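(* There exist infinitely many finite simple graphs $G$ with $\chi_{DP}(G) < AT(G)$; moreover, for every real $M > 0$ there exists a finite simple graph $G$ with $AT(G) / \chi_{DP}(G) > M$.
   Context: Alon--Tarsi number: for a digraph $D$, an Eulerian subdigraph is a spanning subdigraph $F$ with $d^+_F(v) = d^-_F(v)$ for all $v$, called even or odd according to the parity of its number of edges; $AT(G)$ is the minimum $k$ such that some orientation $D$ of $G$ has all outdegrees less than $k$ and the numbers of even and odd Eulerian subdigraphs of $D$ differ. Correspondence coloring: a correspondence assignment $(L,C)$ for $G$ consists of a list $L(v)$ of colors for each vertex $v$ and, for each edge $uv$, a partial matching $C_{uv}$ between $\{u\}\times L(u)$ and $\{v\}\times L(v)$. An $(L,C)$-coloring is a choice $\phi(v)\in L(v)$ for each $v$ such that for every edge $uv$, $(u,\phi(u))$ and $(v,\phi(v))$ are not matched in $C_{uv}$. $G$ is $k$-correspondence-colorable if it has an $(L,C)$-coloring for every correspondence assignment with all lists of size $k$; the correspondence chromatic number $\chi_{DP}(G)$ is the least such $k$. *)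

theory Defs
  imports Complex_Main
begin

definition simple_graph :: "nat set \<Rightarrow> nat set set \<Rightarrow> bool" where
  "simple_graph V E \<longleftrightarrow> finite V \<and> (\<forall>e\<in>E. e \<subseteq> V \<and> card e = 2)"

definition graph_iso :: "nat set \<times> nat set set \<Rightarrow> nat set \<times> nat set set \<Rightarrow> bool" where
  "graph_iso G H \<longleftrightarrow> (\<exists>f. bij_betw f (fst G) (fst H) \<and>
      (\<forall>u\<in>fst G. \<forall>v\<in>fst G. ({u, v} \<in> snd G \<longleftrightarrow> {f u, f v} \<in> snd H)))"

definition orientation :: "nat set set \<Rightarrow> (nat \<times> nat) set \<Rightarrow> bool" where
  "orientation E D \<longleftrightarrow>
     (\<forall>(u,v)\<in>D. {u, v} \<in> E) \<and>
     (\<forall>u v. {u, v} \<in> E \<longrightarrow> u \<noteq> v \<longrightarrow> ((u,v) \<in> D \<longleftrightarrow> (v,u) \<notin> D))"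

definition outdeg :: "(nat \<times> nat) set \<Rightarrow> nat \<Rightarrow> nat" where
  "outdeg F v = card {w. (v, w) \<in> F}"

definition indeg :: "(nat \<times> nat) set \<Rightarrow> nat \<Rightarrow> nat" where
  "indeg F v = card {w. (w, v) \<in> F}"

definition eulerian_subdigraphs :: "nat set \<Rightarrow> (nat \<times> nat) set \<Rightarrow> (nat \<times> nat) set set" where
  "eulerian_subdigraphs V D = {F. F \<subseteq> D \<and> (\<forall>v\<in>V. outdeg F v = indeg F v)}"

definition AT :: "nat set \<Rightarrow> nat set set \<Rightarrow> nat" where
  "AT V E = (LEAST k. \<exists>D. orientation E D \<and> (\<forall>v\<in>V. outdeg D v < k) \<and>
      card {F \<in> eulerian_subdigraphs V D. even (card F)} \<noteq>
      card {F \<in> eulerian_subdigraphs V D. odd (card F)})"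

text \<open>Correspondence assignments: lists L v (colours are naturals) and, for each
  ordered pair (u,v) with {u,v} an edge, a partial matching C u v between L u and L v,
  with C v u the converse of C u v.  (c,d) \<in> C u v means (u,c) is matched to (v,d).\<close>
definition partial_matching :: "nat set \<Rightarrow> nat set \<Rightarrow> (nat \<times> nat) set \<Rightarrow> bool" where
  "partial_matching A B M \<longleftrightarrow> M \<subseteq> A \<times> B \<and>
     (\<forall>c d d'. (c, d) \<in> M \<and> (c, d') \<in> M \<longrightarrow> d = d') \<and>
     (\<forall>c c' d. (c, d) \<in> M \<and> (c', d) \<in> M \<longrightarrow> c = c')"

definition correspondence_assignment ::
  "nat set \<Rightarrow> nat set set \<Rightarrow> (nat \<Rightarrow> nat set) \<Rightarrow> (nat \<Rightarrow> nat \<Rightarrow> (nat \<times> nat) set) \<Rightarrow> bool" where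
  "correspondence_assignment V E L C \<longleftrightarrow>
     (\<forall>u v. {u, v} \<in> E \<longrightarrow> u \<noteq> v \<longrightarrow>
        partial_matching (L u) (L v) (C u v) \<and> C v u = (C u v)\<inverse>)"

definition LC_coloring ::
  "nat set \<Rightarrow> nat set set \<Rightarrow> (nat \<Rightarrow> nat set) \<Rightarrow> (nat \<Rightarrow> nat \<Rightarrow> (nat \<times> nat) set) \<Rightarrow> (nat \<Rightarrow> nat) \<Rightarrow> bool" where
  "LC_coloring V E L C \<phi> \<longleftrightarrow> (\<forall>v\<in>V. \<phi> v \<in> L v) \<and>
     (\<forall>u v. {u, v} \<in> E \<longrightarrow> u \<noteq> v \<longrightarrow> (\<phi> u, \<phi> v) \<notin> C u v)"

definition correspondence_colorable :: "nat set \<Rightarrow> nat set set \<Rightarrow> nat \<Rightarrow> bool" where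
  "correspondence_colorable V E k \<longleftrightarrow>
     (\<forall>L C. (\<forall>v\<in>V. finite (L v) \<and> card (L v) = k) \<and> correspondence_assignment V E L C
        \<longrightarrow> (\<exists>\<phi>. LC_coloring V E L C \<phi>))"

definition chi_DP :: "nat set \<Rightarrow> nat set set \<Rightarrow> nat" where
  "chi_DP V E = (LEAST k. correspondence_colorable V E k)"

end

theory Submission
  imports Defs "HOL-Library.FuncSet"
begin

(* The graphs are the complete bipartite graphs K_{t,t}.  Every orientation of K_{t,t} has t^2 arcs
   on 2t vertices, so AT(K_{t,t}) > t/2; orienting all edges from one side to the other leaves only
   the empty Eulerian subdigraph, which makes AT well defined.
   On the other hand K_{t,t} is k-correspondence-colourable once t (1 - (1 - 1/k)^t)^k < 1: colour
   the left side arbitrarily.  A right vertex b is stuck only if every colour of L(b) is matched to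
   the colour of some left vertex; since each left vertex blocks at most one colour of L(b), at most
   k^t (1 - (1 - 1/k)^t)^k of the k^t choices do this, and a union bound over the t right vertices
   leaves a good choice.  For t = s(k - 1) and k >= 2 s e^(2s) the condition holds, giving
   AT/chi_DP > s/4; already s = 3 gives chi_DP < AT for all large k. *)

lemma power_add_ge_linear_part:
  fixes h d :: "'a::linordered_semidom"
  assumes "0 \<le> h" "0 \<le> d"
  shows "h ^ Suc n + of_nat (Suc n) * h ^ n * d \<le> (h + d) ^ Suc n"
proof (induction n)
  case 0
  show ?case by simp
next
  case (Suc n)
  have "(h + d) * (h ^ Suc n + of_nat (Suc n) * h ^ n * d) =
      h ^ Suc (Suc n) + of_nat (Suc (Suc n)) * h ^ Suc n * d + of_nat (Suc n) * h ^ n * d * d"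
    by (simp add: algebra_simps)
  then have "h ^ Suc (Suc n) + of_nat (Suc (Suc n)) * h ^ Suc n * d
      \<le> (h + d) * (h ^ Suc n + of_nat (Suc n) * h ^ n * d)"
    using assms by simp
  also have "\<dots> \<le> (h + d) * (h + d) ^ Suc n"
    using Suc assms by (intro mult_left_mono) auto
  finally show ?case by simp
qed

(* With R a = C a b and S = L b these are the colourings of the side A that leave no colour for b. *)
definition covering_choices ::
  "'a set \<Rightarrow> ('a \<Rightarrow> 'c set) \<Rightarrow> ('a \<Rightarrow> ('c \<times> 'd) set) \<Rightarrow> 'd set \<Rightarrow> ('a \<Rightarrow> 'c) set" where
  "covering_choices A L R S = {\<phi> \<in> PiE A L. \<forall>c\<in>S. \<exists>a\<in>A. (\<phi> a, c) \<in> R a}"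

lemma covering_choices_insert:
  assumes "a \<notin> A"
  shows "covering_choices (insert a A) L R S =
    (\<lambda>(x, g). g(a := x)) ` Sigma (L a) (\<lambda>x. covering_choices A L R (S - R a `` {x}))"
  (is "?lhs = ?rhs")
proof (intro equalityI subsetI)
  fix f assume f: "f \<in> ?lhs"
  then obtain x g where xg: "x \<in> L a" "g \<in> PiE A L" "f = g(a := x)"
    by (auto simp: covering_choices_def PiE_insert_eq)
  have "\<exists>a'\<in>A. (g a', c) \<in> R a'" if c: "c \<in> S - R a `` {x}" for c
  proof -
    obtain a' where "a' \<in> insert a A" "(f a', c) \<in> R a'"
      using f c by (auto simp: covering_choices_def)
    then show ?thesis using c xg assms by (cases "a' = a") auto
  qed
  then have "g \<in> covering_choices A L R (S - R a `` {x})"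
    using xg by (simp add: covering_choices_def)
  then show "f \<in> ?rhs" using xg by force
next
  fix f assume "f \<in> ?rhs"
  then obtain x g where "x \<in> L a" "g \<in> covering_choices A L R (S - R a `` {x})" "f = g(a := x)"
    by auto
  moreover have "\<exists>a'\<in>insert a A. (f a', c) \<in> R a'" if "c \<in> S" for c
    using calculation that assms by (cases "c \<in> R a `` {x}") (auto simp: covering_choices_def)
  ultimately show "f \<in> ?lhs"
    by (auto simp: covering_choices_def PiE_insert_eq)
qed

lemma card_covering_choices_insert:
  assumes "finite A" "a \<notin> A" "\<forall>i\<in>insert a A. finite (L i)"
  shows "card (covering_choices (insert a A) L R S) =
    (\<Sum>x\<in>L a. card (covering_choices A L R (S - R a `` {x})))"
proof -
  have "Sigma (L a) (\<lambda>x. covering_choices A L R (S - R a `` {x})) \<subseteq> L a \<times> PiE A L"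
    by (auto simp: covering_choices_def)
  then have "inj_on (\<lambda>(x, g). g(a := x)) (Sigma (L a) (\<lambda>x. covering_choices A L R (S - R a `` {x})))"
    by (rule inj_on_subset[OF inj_combinator[OF assms(2)]])
  moreover have "finite (covering_choices A L R S')" for S'
    using assms by (intro finite_subset[OF _ finite_PiE[of A L]]) (auto simp: covering_choices_def)
  ultimately show ?thesis
    using assms by (simp add: covering_choices_insert card_image)
qed

lemma sum_card_Image_inter_le:
  assumes "finite X" "finite S" "single_valued (R\<inverse>)"
  shows "(\<Sum>x\<in>X. card (R `` {x} \<inter> S)) \<le> card S"
proof -
  have "(\<Sum>x\<in>X. card (R `` {x} \<inter> S)) = card (\<Union>x\<in>X. R `` {x} \<inter> S)"
    using assms by (intro card_UN_disjoint[symmetric]) (auto simp: single_valued_def)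
  also have "\<dots> \<le> card S" using assms(2) by (intro card_mono) auto
  finally show ?thesis .
qed

lemma card_Image_inter_le_1:
  assumes "single_valued R"
  shows "card (R `` {x} \<inter> S) \<le> 1"
proof (cases "finite (R `` {x} \<inter> S)")
  case True
  then show ?thesis using assms by (auto simp: single_valued_def card_le_Suc0_iff_eq)
qed simp

lemma sum_power_minus_le:
  fixes j :: "'x \<Rightarrow> nat" and h :: real
  assumes "finite X" "card X = k" "k \<ge> 1" "0 \<le> h" "h \<le> 1"
    and "\<forall>x\<in>X. j x \<le> 1" "(\<Sum>x\<in>X. j x) \<le> m"
  shows "(\<Sum>x\<in>X. h ^ (m - j x)) \<le> real k * (h + (1 - h) / real k) ^ m"
proof (cases m)
  case 0
  then show ?thesis using assms by simp
next
  case (Suc n)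
  have "h ^ (m - j x) = h ^ m + real (j x) * (h ^ n * (1 - h))" if "x \<in> X" for x
    using assms(6) that Suc by (cases "j x") (auto simp: algebra_simps)
  then have "(\<Sum>x\<in>X. h ^ (m - j x)) = real k * h ^ m + real (\<Sum>x\<in>X. j x) * (h ^ n * (1 - h))"
    using assms(2) by (simp add: sum.distrib sum_distrib_right)
  also have "\<dots> \<le> real k * h ^ m + real m * (h ^ n * (1 - h))"
    using assms(4,5,7) by (intro add_left_mono mult_right_mono) (auto simp del: of_nat_sum)
  also have "\<dots> = real k * (h ^ Suc n + real (Suc n) * h ^ n * ((1 - h) / real k))"
    using assms(3) Suc by (simp add: field_simps)
  also have "\<dots> \<le> real k * (h + (1 - h) / real k) ^ Suc n"
    using assms(4,5) by (intro mult_left_mono power_add_ge_linear_part) auto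
  finally show ?thesis using Suc by simp
qed

(* As if the events "c is covered" were independent, each of probability 1 - (1 - 1/k)^|A|. *)
lemma card_covering_choices_le:
  assumes "finite A" "finite S" "k \<ge> 1"
    and "\<forall>a\<in>A. finite (L a) \<and> card (L a) = k"
    and "\<forall>a\<in>A. single_valued (R a) \<and> single_valued ((R a)\<inverse>)"
  shows "real (card (covering_choices A L R S))
    \<le> real k ^ card A * (1 - (1 - 1 / real k) ^ card A) ^ card S"
  using assms(1,2,4,5)
proof (induction A arbitrary: S rule: finite_induct)
  case empty
  then show ?case
    by (cases "S = {}") (auto simp: covering_choices_def card_le_Suc0_iff_eq)
next
  case (insert a A)
  define h where "h = 1 - (1 - 1 / real k) ^ card A"
  define j where "j x = card (R a `` {x} \<inter> S)" for x
  have "0 \<le> 1 - 1 / real k" "1 - 1 / real k \<le> 1"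
    using assms(3) by auto
  then have h: "0 \<le> h" "h \<le> 1"
    by (auto simp: h_def power_le_one)
  have "real (card (covering_choices A L R (S - R a `` {x})))
      \<le> real k ^ card A * h ^ (card S - j x)" for x
  proof -
    have "card (S - R a `` {x}) = card S - j x"
      using insert.prems(1) by (simp add: j_def card_Diff_subset_Int Int_commute)
    then show ?thesis
      using insert.IH[of "S - R a `` {x}"] insert.prems by (simp add: h_def)
  qed
  then have "real (card (covering_choices (insert a A) L R S))
      \<le> (\<Sum>x\<in>L a. real k ^ card A * h ^ (card S - j x))"
    using insert.hyps insert.prems by (simp add: card_covering_choices_insert sum_mono)
  also have "\<dots> \<le> real k ^ card A * (real k * (h + (1 - h) / real k) ^ card S)"
  proof -
    have "\<forall>x\<in>L a. j x \<le> 1"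
      using insert.prems(3) unfolding j_def by (intro ballI card_Image_inter_le_1) simp
    moreover have "(\<Sum>x\<in>L a. j x) \<le> card S"
      using insert.prems unfolding j_def by (intro sum_card_Image_inter_le) auto
    ultimately show ?thesis
      unfolding sum_distrib_left[symmetric] using insert.prems h assms(3)
      by (intro mult_left_mono sum_power_minus_le) auto
  qed
  also have "h + (1 - h) / real k = 1 - (1 - 1 / real k) ^ card (insert a A)"
    using insert.hyps assms(3) by (simp add: h_def field_simps)
  finally show ?case
    using insert.hyps by (simp add: mult.assoc mult.left_commute)
qed

lemma exists_choice_avoiding_coverings:
  assumes "finite A" "finite B" "k \<ge> 1"
    and "\<forall>a\<in>A. finite (L a) \<and> card (L a) = k"
    and "\<forall>b\<in>B. finite (S b) \<and> card (S b) = k"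
    and "\<forall>a\<in>A. \<forall>b\<in>B. single_valued (R a b) \<and> single_valued ((R a b)\<inverse>)"
    and "real (card B) * (1 - (1 - 1 / real k) ^ card A) ^ k < 1"
  obtains \<phi> where "\<phi> \<in> PiE A L" "\<forall>b\<in>B. \<phi> \<notin> covering_choices A L (\<lambda>a. R a b) (S b)"
proof -
  let ?bad = "\<Union>b\<in>B. covering_choices A L (\<lambda>a. R a b) (S b)"
  have card_PiE_eq: "card (PiE A L) = k ^ card A"
    using assms(1,4) by (simp add: card_PiE)
  have "real (card ?bad) \<le> (\<Sum>b\<in>B. real (card (covering_choices A L (\<lambda>a. R a b) (S b))))"
    using assms(2) by (simp add: card_UN_le flip: of_nat_sum)
  also have "\<dots> \<le> (\<Sum>b\<in>B. real k ^ card A * (1 - (1 - 1 / real k) ^ card A) ^ k)"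
  proof (intro sum_mono)
    fix b assume "b \<in> B"
    then show "real (card (covering_choices A L (\<lambda>a. R a b) (S b)))
      \<le> real k ^ card A * (1 - (1 - 1 / real k) ^ card A) ^ k"
      using card_covering_choices_le[OF assms(1) _ assms(3,4), of "S b" "\<lambda>a. R a b"] assms(5,6)
      by simp
  qed
  also have "\<dots> < real k ^ card A"
    using assms(3,7) by simp
  finally have "card ?bad < card (PiE A L)"
    unfolding card_PiE_eq of_nat_power[symmetric] of_nat_less_iff .
  moreover have "?bad \<subseteq> PiE A L"
    by (auto simp: covering_choices_def)
  ultimately have "\<not> PiE A L \<subseteq> ?bad"
    by auto
  then show ?thesis using that by blast
qed

lemma partial_matching_single_valued:
  assumes "partial_matching A B M"
  shows "single_valued M" "single_valued (M\<inverse>)"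
  using assms unfolding partial_matching_def single_valued_def by blast+

definition complete_bipartite_edges :: "nat set \<Rightarrow> nat set \<Rightarrow> nat set set" where
  "complete_bipartite_edges A B = {{a, b} | a b. a \<in> A \<and> b \<in> B}"

lemma doubleton_in_complete_bipartite_edges:
  "{u, v} \<in> complete_bipartite_edges A B \<longleftrightarrow> (u \<in> A \<and> v \<in> B) \<or> (v \<in> A \<and> u \<in> B)"
  by (auto simp: complete_bipartite_edges_def doubleton_eq_iff)

lemma simple_graph_complete_bipartite:
  assumes "finite A" "finite B" "A \<inter> B = {}"
  shows "simple_graph (A \<union> B) (complete_bipartite_edges A B)"
  using assms by (fastforce simp: simple_graph_def complete_bipartite_edges_def card_2_iff)

lemma correspondence_assignment_complete_bipartite:
  assumes "correspondence_assignment (A \<union> B) (complete_bipartite_edges A B) L C"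
    and "A \<inter> B = {}" "a \<in> A" "b \<in> B"
  shows "partial_matching (L a) (L b) (C a b)" "C b a = (C a b)\<inverse>"
proof -
  have "{a, b} \<in> complete_bipartite_edges A B" "a \<noteq> b"
    using assms(2-) by (auto simp: doubleton_in_complete_bipartite_edges)
  then show "partial_matching (L a) (L b) (C a b)" "C b a = (C a b)\<inverse>"
    using assms(1) unfolding correspondence_assignment_def by blast+
qed

lemma LC_coloring_complete_bipartite_extend:
  assumes "correspondence_assignment (A \<union> B) (complete_bipartite_edges A B) L C"
    and "A \<inter> B = {}" "\<phi> \<in> PiE A L"
    and "\<forall>b\<in>B. \<phi> \<notin> covering_choices A L (\<lambda>a. C a b) (L b)"
  shows "\<exists>\<psi>. LC_coloring (A \<union> B) (complete_bipartite_edges A B) L C \<psi>"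
proof
  define free where "free b c \<longleftrightarrow> c \<in> L b \<and> (\<forall>a\<in>A. (\<phi> a, c) \<notin> C a b)" for b c
  define \<psi> where "\<psi> v = (if v \<in> A then \<phi> v else SOME c. free v c)" for v
  have \<psi>B: "free b (\<psi> b)" if "b \<in> B" for b
  proof -
    have "\<exists>c. free b c"
      using assms(3,4) that by (auto simp: free_def covering_choices_def)
    then show ?thesis
      using that assms(2) by (auto simp: \<psi>_def intro: someI_ex)
  qed
  have \<psi>A: "\<psi> a = \<phi> a" "\<phi> a \<in> L a" if "a \<in> A" for a
    using that assms(3) by (auto simp: \<psi>_def)
  show "LC_coloring (A \<union> B) (complete_bipartite_edges A B) L C \<psi>"
    unfolding LC_coloring_def
  proof (intro conjI allI impI ballI)
    fix v assume "v \<in> A \<union> B"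
    then show "\<psi> v \<in> L v"
      using \<psi>A \<psi>B by (auto simp: free_def)
  next
    fix u v assume "{u, v} \<in> complete_bipartite_edges A B"
    then consider "u \<in> A" "v \<in> B" | "v \<in> A" "u \<in> B"
      unfolding doubleton_in_complete_bipartite_edges by blast
    then show "(\<psi> u, \<psi> v) \<notin> C u v"
    proof cases
      case 1
      then show ?thesis using \<psi>A \<psi>B by (auto simp: free_def)
    next
      case 2
      then have "C u v = (C v u)\<inverse>"
        using correspondence_assignment_complete_bipartite(2)[OF assms(1,2)] by simp
      then show ?thesis using 2 \<psi>A \<psi>B by (auto simp: free_def)
    qed
  qed
qed

lemma correspondence_colorable_complete_bipartite:
  assumes "finite A" "finite B" "A \<inter> B = {}" "k \<ge> 1"
    and "real (card B) * (1 - (1 - 1 / real k) ^ card A) ^ k < 1"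
  shows "correspondence_colorable (A \<union> B) (complete_bipartite_edges A B) k"
  unfolding correspondence_colorable_def
proof (intro allI impI, elim conjE)
  fix L C
  assume L: "\<forall>v\<in>A \<union> B. finite (L v) \<and> card (L v) = k"
    and C: "correspondence_assignment (A \<union> B) (complete_bipartite_edges A B) L C"
  have "\<forall>a\<in>A. \<forall>b\<in>B. single_valued (C a b) \<and> single_valued ((C a b)\<inverse>)"
    using correspondence_assignment_complete_bipartite(1)[OF C assms(3)]
      partial_matching_single_valued by blast
  moreover have "\<forall>a\<in>A. finite (L a) \<and> card (L a) = k" "\<forall>b\<in>B. finite (L b) \<and> card (L b) = k"
    using L by auto
  ultimately obtain \<phi> where "\<phi> \<in> PiE A L" "\<forall>b\<in>B. \<phi> \<notin> covering_choices A L (\<lambda>a. C a b) (L b)"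
    using exists_choice_avoiding_coverings[OF assms(1,2,4)] assms(5) by metis
  then show "\<exists>\<psi>. LC_coloring (A \<union> B) (complete_bipartite_edges A B) L C \<psi>"
    using LC_coloring_complete_bipartite_extend[OF C assms(3)] by blast
qed

lemma orientation_arc_edge: "orientation E D \<Longrightarrow> (u, v) \<in> D \<Longrightarrow> {u, v} \<in> E"
  unfolding orientation_def by blast

lemma orientation_arc_iff:
  "orientation E D \<Longrightarrow> {u, v} \<in> E \<Longrightarrow> u \<noteq> v \<Longrightarrow> (u, v) \<in> D \<longleftrightarrow> (v, u) \<notin> D"
  unfolding orientation_def by blast

lemma simple_graph_edge_neq: "simple_graph V E \<Longrightarrow> {u, v} \<in> E \<Longrightarrow> u \<noteq> v"
  unfolding simple_graph_def by fastforce

lemma orientation_subset: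
  assumes "simple_graph V E" "orientation E D"
  shows "D \<subseteq> V \<times> V"
proof clarify
  fix u v assume "(u, v) \<in> D"
  then have "{u, v} \<in> E" by (rule orientation_arc_edge[OF assms(2)])
  then show "u \<in> V \<and> v \<in> V" using assms(1) unfolding simple_graph_def by blast
qed

lemma card_orientation:
  assumes "simple_graph V E" "orientation E D"
  shows "card D = card E"
proof -
  have "bij_betw (\<lambda>(u, v). {u, v}) D E"
  proof (rule bij_betw_imageI)
    show "inj_on (\<lambda>(u, v). {u, v}) D"
    proof (rule inj_onI, clarify)
      fix u v u' v' assume arcs: "(u, v) \<in> D" "(u', v') \<in> D" and "{u, v} = {u', v'}"
      then consider "u = u'" "v = v'" | "u = v'" "v = u'"
        by (auto simp: doubleton_eq_iff)
      then show "u = u' \<and> v = v'"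
      proof cases
        case 2
        have "{u, v} \<in> E" using arcs(1) assms(2) by (rule orientation_arc_edge[rotated])
        then show ?thesis
          using arcs 2 assms orientation_arc_iff simple_graph_edge_neq by metis
      qed simp
    qed
    show "(\<lambda>(u, v). {u, v}) ` D = E"
    proof (intro equalityI subsetI)
      fix e assume "e \<in> E"
      moreover from this obtain u v where e: "e = {u, v}"
        using assms(1) by (auto simp: simple_graph_def card_2_iff)
      ultimately have "(u, v) \<in> D \<or> (v, u) \<in> D"
        using assms orientation_arc_iff simple_graph_edge_neq by metis
      moreover have "{v, u} = e" using e by blast
      ultimately show "e \<in> (\<lambda>(u, v). {u, v}) ` D"
        using e by force
    qed (auto intro: orientation_arc_edge[OF assms(2)])
  qed
  then show ?thesis by (rule bij_betw_same_card)
qed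

lemma card_eq_sum_outdeg:
  assumes "finite V" "D \<subseteq> V \<times> V"
  shows "card D = (\<Sum>v\<in>V. outdeg D v)"
proof -
  have "D = Sigma V (\<lambda>v. {w. (v, w) \<in> D})" using assms(2) by auto
  then have "card D = card (Sigma V (\<lambda>v. {w. (v, w) \<in> D}))" by (rule arg_cong)
  also have "\<dots> = (\<Sum>v\<in>V. card {w. (v, w) \<in> D})"
    using assms by (intro card_SigmaI) (auto intro: finite_subset[of _ V])
  finally show ?thesis unfolding outdeg_def .
qed

lemma card_edges_le_AT:
  assumes "simple_graph V E" "orientation E D" "\<forall>v\<in>V. outdeg D v < K"
    and "card {F \<in> eulerian_subdigraphs V D. even (card F)} \<noteq>
      card {F \<in> eulerian_subdigraphs V D. odd (card F)}"
  shows "card E \<le> card V * (AT V E - 1)"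
proof -
  \<comment> \<open>The witness D only serves to make the LEAST in the definition of AT well defined.\<close>
  obtain D' where D': "orientation E D'" "\<forall>v\<in>V. outdeg D' v < AT V E"
    using LeastI[where k = K, of "\<lambda>k. \<exists>D. orientation E D \<and> (\<forall>v\<in>V. outdeg D v < k) \<and>
      card {F \<in> eulerian_subdigraphs V D. even (card F)} \<noteq>
      card {F \<in> eulerian_subdigraphs V D. odd (card F)}"] assms(2-)
    unfolding AT_def by blast
  have "card E = card D'"
    using card_orientation[OF assms(1) D'(1)] by simp
  also have "\<dots> = (\<Sum>v\<in>V. outdeg D' v)"
    using assms(1) orientation_subset[OF assms(1) D'(1)]
    by (intro card_eq_sum_outdeg) (auto simp: simple_graph_def)
  also have "\<dots> \<le> (\<Sum>v\<in>V. AT V E - 1)"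
    using D'(2) by (intro sum_mono) auto
  finally show ?thesis by simp
qed

lemma eulerian_subdigraphs_bipartite:
  assumes "A \<inter> B = {}" "finite B" "A \<subseteq> V"
  shows "eulerian_subdigraphs V (A \<times> B) = {{}}"
proof (intro equalityI subsetI)
  fix F assume F: "F \<in> eulerian_subdigraphs V (A \<times> B)"
  show "F \<in> {{}}"
  proof (rule ccontr)
    assume "F \<notin> {{}}"
    then obtain a b where ab: "(a, b) \<in> F" by auto
    then have "a \<in> A" using F by (auto simp: eulerian_subdigraphs_def)
    have "{w. (a, w) \<in> F} \<subseteq> B" using F by (auto simp: eulerian_subdigraphs_def)
    then have "outdeg F a > 0"
      using ab assms(2) by (auto simp: outdeg_def card_gt_0_iff intro: finite_subset)
    moreover have "{w. (w, a) \<in> F} = {}"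
      using F \<open>a \<in> A\<close> assms(1) by (auto simp: eulerian_subdigraphs_def)
    then have "indeg F a = 0" by (simp add: indeg_def)
    ultimately show False
      using F \<open>a \<in> A\<close> assms(3) by (auto simp: eulerian_subdigraphs_def)
  qed
qed (simp add: eulerian_subdigraphs_def outdeg_def indeg_def)

lemma orientation_complete_bipartite:
  assumes "A \<inter> B = {}"
  shows "orientation (complete_bipartite_edges A B) (A \<times> B)"
  using assms by (auto simp: orientation_def doubleton_in_complete_bipartite_edges)

lemma card_complete_bipartite_edges:
  assumes "finite A" "finite B" "A \<inter> B = {}"
  shows "card (complete_bipartite_edges A B) = card A * card B"
proof -
  have "complete_bipartite_edges A B = (\<lambda>(a, b). {a, b}) ` (A \<times> B)"
    by (auto simp: complete_bipartite_edges_def)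
  moreover have "inj_on (\<lambda>(a, b). {a, b}) (A \<times> B)"
    using assms(3) by (auto simp: inj_on_def doubleton_eq_iff)
  ultimately show ?thesis
    by (simp add: card_image card_cartesian_product)
qed

lemma AT_complete_bipartite_ge:
  assumes "finite A" "finite B" "A \<inter> B = {}"
  shows "card A * card B \<le> (card A + card B) * (AT (A \<union> B) (complete_bipartite_edges A B) - 1)"
proof -
  have "outdeg (A \<times> B) v \<le> card B" for v
    unfolding outdeg_def using assms(2) by (intro card_mono) auto
  then have "\<forall>v\<in>A \<union> B. outdeg (A \<times> B) v < Suc (card B)"
    by (simp add: le_imp_less_Suc)
  moreover have parity:
    "{F \<in> eulerian_subdigraphs (A \<union> B) (A \<times> B). even (card F)} = {{}}"
    "{F \<in> eulerian_subdigraphs (A \<union> B) (A \<times> B). odd (card F)} = {}"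
    using eulerian_subdigraphs_bipartite[of A B "A \<union> B"] assms by auto
  ultimately have "card (complete_bipartite_edges A B)
      \<le> card (A \<union> B) * (AT (A \<union> B) (complete_bipartite_edges A B) - 1)"
    by (intro card_edges_le_AT[OF simple_graph_complete_bipartite[OF assms]
          orientation_complete_bipartite[OF assms(3)]]) (simp_all only: parity, simp)
  then show ?thesis
    using assms by (simp add: card_complete_bipartite_edges card_Un_disjoint)
qed

lemma not_correspondence_colorable_0:
  assumes "V \<noteq> {}"
  shows "\<not> correspondence_colorable V E 0"
proof
  assume "correspondence_colorable V E 0"
  moreover have "correspondence_assignment V E (\<lambda>_. {}) (\<lambda>_ _. {})"
    by (simp add: correspondence_assignment_def partial_matching_def)
  ultimately have "\<exists>\<phi>. LC_coloring V E (\<lambda>_. {}) (\<lambda>_ _. {}) \<phi>"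
    unfolding correspondence_colorable_def by simp
  then obtain \<phi> where "LC_coloring V E (\<lambda>_. {}) (\<lambda>_ _. {}) \<phi>" ..
  then show False
    using assms by (auto simp: LC_coloring_def)
qed

lemma chi_DP_between:
  assumes "correspondence_colorable V E k" "V \<noteq> {}"
  shows "1 \<le> chi_DP V E" "chi_DP V E \<le> k"
proof -
  have "correspondence_colorable V E (chi_DP V E)"
    unfolding chi_DP_def using assms(1) by (rule LeastI)
  then show "1 \<le> chi_DP V E"
    using not_correspondence_colorable_0[OF assms(2)] by (cases "chi_DP V E") auto
  show "chi_DP V E \<le> k"
    unfolding chi_DP_def using assms(1) by (rule Least_le)
qed

lemma exp_minus_one_le_power:
  assumes "k \<ge> 2"
  shows "exp (- 1) \<le> (1 - 1 / real k) ^ (k - 1)"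
proof -
  define n where "n = real (k - 1)"
  have n: "n > 0" "real k = n + 1"
    using assms by (auto simp: n_def)
  have "exp (- 1 / n) = inverse (exp (1 / n))"
    by (simp add: exp_minus)
  also have "\<dots> \<le> inverse (1 + 1 / n)"
    using n by (intro le_imp_inverse_le) (auto intro: add_pos_nonneg)
  also have "\<dots> = 1 - 1 / real k"
    using n by (simp add: field_simps)
  finally have "exp (- 1 / n) ^ (k - 1) \<le> (1 - 1 / real k) ^ (k - 1)"
    by (intro power_mono) auto
  moreover have "exp (- 1 / n) ^ (k - 1) = exp (- 1)"
    using n by (simp add: n_def exp_of_nat_mult[symmetric])
  ultimately show ?thesis by simp
qed

lemma one_minus_power_le_exp:
  fixes x :: real
  assumes "0 \<le> x" "x \<le> 1"
  shows "(1 - x) ^ n \<le> exp (- (x * real n))"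
proof -
  have "(1 - x) ^ n \<le> exp (- x) ^ n"
    using assms exp_ge_add_one_self[of "- x"] by (intro power_mono) auto
  then show ?thesis
    by (simp add: exp_of_nat_mult[symmetric] mult.commute)
qed

lemma mult_less_exp_exp_minus:
  fixes s k :: nat
  assumes "2 * real s * exp (2 * real s) \<le> real k"
  shows "real s * real k < exp (exp (- real s) * real k)"
proof -
  define q where "q = exp (- real s)"
  define x where "x = q * real k"
  have "0 \<le> x"
    by (simp add: x_def q_def)
  have "q * q * exp (2 * real s) = 1"
    by (simp add: q_def flip: exp_add)
  then have "q * q * (2 * real s * exp (2 * real s)) = 2 * real s"
    by (simp add: algebra_simps)
  moreover have "q * q * (2 * real s * exp (2 * real s)) \<le> q * q * real k"
    using assms by (intro mult_left_mono) auto
  ultimately have "2 * real s \<le> q * q * real k"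
    by linarith
  then have "real k * (2 * real s) \<le> real k * (q * q * real k)"
    by (intro mult_left_mono) auto
  then have "real s * real k \<le> real k * (q * q * real k) / 2"
    by (simp add: mult_ac)
  also have "\<dots> = x\<^sup>2 / 2"
    by (simp add: x_def power2_eq_square algebra_simps)
  also have "\<dots> < exp x"
    using exp_lower_Taylor_quadratic[OF \<open>0 \<le> x\<close>] \<open>0 \<le> x\<close> by linarith
  finally show ?thesis
    by (simp add: x_def q_def)
qed

lemma scaled_union_bound_lt_one:
  fixes s k :: nat
  assumes "s \<ge> 1" "k \<ge> 2" "2 * real s * exp (2 * real s) \<le> real k"
  shows "real (s * (k - 1)) * (1 - (1 - 1 / real k) ^ (s * (k - 1))) ^ k < 1"
proof -
  define p where "p = (1 - 1 / real k) ^ (s * (k - 1))"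
  define q where "q = exp (- real s)"
  have "0 \<le> 1 - 1 / real k" "1 - 1 / real k \<le> 1"
    using assms(2) by auto
  then have "p \<le> 1"
    by (simp add: p_def power_le_one)
  have "q = exp (- 1) ^ s"
    by (simp add: q_def exp_of_nat_mult[symmetric])
  also have "\<dots> \<le> ((1 - 1 / real k) ^ (k - 1)) ^ s"
    using exp_minus_one_le_power[OF assms(2)] by (intro power_mono) auto
  also have "\<dots> = p"
    by (simp add: p_def mult.commute flip: power_mult)
  finally have "q \<le> p" .
  have "(1 - p) ^ k \<le> (1 - q) ^ k"
    using \<open>q \<le> p\<close> \<open>p \<le> 1\<close> by (intro power_mono) auto
  also have "\<dots> \<le> exp (- (q * real k))"
    using \<open>q \<le> p\<close> \<open>p \<le> 1\<close> by (intro one_minus_power_le_exp) (auto simp: q_def)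
  finally have "(1 - p) ^ k \<le> exp (- (q * real k))" .
  have "s * (k - 1) < s * k"
    using assms(1,2) by simp
  then have "real (s * (k - 1)) < real s * real k"
    by (simp only: of_nat_mult[symmetric] of_nat_less_iff)
  also have "\<dots> < exp (q * real k)"
    using mult_less_exp_exp_minus[OF assms(3)] by (simp add: q_def)
  finally have "real (s * (k - 1)) * exp (- (q * real k)) < 1"
    by (simp add: exp_minus field_simps)
  moreover have "real (s * (k - 1)) * (1 - p) ^ k \<le> real (s * (k - 1)) * exp (- (q * real k))"
    using \<open>(1 - p) ^ k \<le> exp (- (q * real k))\<close> by (intro mult_left_mono) auto
  ultimately show ?thesis
    unfolding p_def by linarith
qed

definition Ktt_verts :: "nat \<Rightarrow> nat set" where
  "Ktt_verts t = {..<t} \<union> {t..<2 * t}"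

definition Ktt_edges :: "nat \<Rightarrow> nat set set" where
  "Ktt_edges t = complete_bipartite_edges {..<t} {t..<2 * t}"

lemma card_Ktt_verts: "card (Ktt_verts t) = 2 * t"
  unfolding Ktt_verts_def by (subst card_Un_disjoint) auto

lemma simple_graph_Ktt: "simple_graph (Ktt_verts t) (Ktt_edges t)"
  unfolding Ktt_verts_def Ktt_edges_def by (rule simple_graph_complete_bipartite) auto

lemma Ktt_chi_DP_AT:
  assumes "t \<ge> 1" "k \<ge> 1" "real t * (1 - (1 - 1 / real k) ^ t) ^ k < 1"
  shows "1 \<le> chi_DP (Ktt_verts t) (Ktt_edges t)" "chi_DP (Ktt_verts t) (Ktt_edges t) \<le> k"
    and "t \<le> 2 * (AT (Ktt_verts t) (Ktt_edges t) - 1)"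
proof -
  have sides: "finite {..<t}" "finite {t..<2 * t}" "{..<t} \<inter> {t..<2 * t} = {}"
    by auto
  have "correspondence_colorable (Ktt_verts t) (Ktt_edges t) k"
    unfolding Ktt_verts_def Ktt_edges_def
    using sides assms(2,3) by (intro correspondence_colorable_complete_bipartite) auto
  moreover have "Ktt_verts t \<noteq> {}"
    using assms(1) by (auto simp: Ktt_verts_def)
  ultimately show "1 \<le> chi_DP (Ktt_verts t) (Ktt_edges t)" "chi_DP (Ktt_verts t) (Ktt_edges t) \<le> k"
    by (rule chi_DP_between)+
  have "t * t \<le> (t + t) * (AT (Ktt_verts t) (Ktt_edges t) - 1)"
    using AT_complete_bipartite_ge[OF sides] by (simp add: Ktt_verts_def Ktt_edges_def)
  also have "\<dots> = t * (2 * (AT (Ktt_verts t) (Ktt_edges t) - 1))"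
    by simp
  finally show "t \<le> 2 * (AT (Ktt_verts t) (Ktt_edges t) - 1)"
    using assms(1) by simp
qed

lemma Ktt_chi_DP_AT_scaled:
  fixes s k :: nat
  assumes "s \<ge> 1" "k \<ge> 2" "2 * real s * exp (2 * real s) \<le> real k"
  shows "1 \<le> chi_DP (Ktt_verts (s * (k - 1))) (Ktt_edges (s * (k - 1)))"
    and "chi_DP (Ktt_verts (s * (k - 1))) (Ktt_edges (s * (k - 1))) \<le> k"
    and "s * (k - 1) \<le> 2 * (AT (Ktt_verts (s * (k - 1))) (Ktt_edges (s * (k - 1))) - 1)"
proof -
  have "1 \<le> s * (k - 1)" "1 \<le> k"
    using assms(1,2) by simp_all
  note bounds = Ktt_chi_DP_AT[OF this scaled_union_bound_lt_one[OF assms]]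
  show "1 \<le> chi_DP (Ktt_verts (s * (k - 1))) (Ktt_edges (s * (k - 1)))"
    and "chi_DP (Ktt_verts (s * (k - 1))) (Ktt_edges (s * (k - 1))) \<le> k"
    and "s * (k - 1) \<le> 2 * (AT (Ktt_verts (s * (k - 1))) (Ktt_edges (s * (k - 1))) - 1)"
    by (fact bounds)+
qed

lemma Ktt_chi_DP_less_AT:
  assumes "k \<ge> 2" "6 * exp 6 \<le> real k"
  shows "chi_DP (Ktt_verts (3 * (k - 1))) (Ktt_edges (3 * (k - 1)))
    < AT (Ktt_verts (3 * (k - 1))) (Ktt_edges (3 * (k - 1)))"
proof -
  have "2 * real 3 * exp (2 * real 3) \<le> real k"
    using assms(2) by simp
  from Ktt_chi_DP_AT_scaled(2,3)[OF one_le_numeral assms(1) this] show ?thesis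
    using assms(1) by linarith
qed

lemma graph_iso_refl: "graph_iso G G"
  unfolding graph_iso_def by (intro exI[of _ id]) simp

lemma graph_iso_Ktt_imp_eq:
  assumes "graph_iso (Ktt_verts t, Ktt_edges t) (Ktt_verts t', Ktt_edges t')"
  shows "t = t'"
proof -
  obtain f where "bij_betw f (Ktt_verts t) (Ktt_verts t')"
    using assms unfolding graph_iso_def by auto
  then show ?thesis
    using bij_betw_same_card card_Ktt_verts by fastforce
qed

lemma infinitely_many_graphs_chi_DP_less_AT:
  "\<exists>S. infinite S \<and>
     (\<forall>(V, E)\<in>S. simple_graph V E \<and> chi_DP V E < AT V E) \<and>
     (\<forall>G\<in>S. \<forall>H\<in>S. G \<noteq> H \<longrightarrow> \<not> graph_iso G H)"
proof -
  define K where "K = {nat \<lceil>6 * exp 6 :: real\<rceil> + 2..}"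
  define G where "G k = (Ktt_verts (3 * (k - 1)), Ktt_edges (3 * (k - 1)))" for k
  have K: "2 \<le> k" "6 * exp 6 \<le> real k" if "k \<in> K" for k
    using that unfolding K_def by (simp_all, linarith)
  have iso: "k = k'" if "k \<in> K" "k' \<in> K" "graph_iso (G k) (G k')" for k k'
    using graph_iso_Ktt_imp_eq[OF that(3)[unfolded G_def]] K(1)[OF that(1)] K(1)[OF that(2)]
    by simp
  have "inj_on G K"
    using iso graph_iso_refl by (metis inj_onI)
  then have "infinite (G ` K)"
    using finite_imageD infinite_Ici unfolding K_def by blast
  moreover have "\<forall>(V, E)\<in>G ` K. simple_graph V E \<and> chi_DP V E < AT V E"
    using simple_graph_Ktt Ktt_chi_DP_less_AT K by (auto simp: G_def)
  moreover have "\<forall>G\<^sub>1\<in>G ` K. \<forall>G\<^sub>2\<in>G ` K. G\<^sub>1 \<noteq> G\<^sub>2 \<longrightarrow> \<not> graph_iso G\<^sub>1 G\<^sub>2"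
    using iso by blast
  ultimately show ?thesis
    by blast
qed

lemma AT_div_chi_DP_unbounded:
  fixes M :: real
  assumes "M > 0"
  shows "\<exists>V E. simple_graph V E \<and> real (AT V E) / real (chi_DP V E) > M"
proof -
  define s where "s = nat \<lceil>4 * M\<rceil>"
  define k where "k = nat \<lceil>2 * real s * exp (2 * real s)\<rceil> + 2"
  define t where "t = s * (k - 1)"
  have "1 \<le> \<lceil>4 * M\<rceil>"
    using assms by simp
  then have s: "s \<ge> 1" "4 * M \<le> real s"
    unfolding s_def by linarith+
  have k: "k \<ge> 2" "2 * real s * exp (2 * real s) \<le> real k"
    unfolding k_def by (simp_all, linarith)
  note bounds = Ktt_chi_DP_AT_scaled[OF s(1) k, folded t_def]
  have "real s * real k \<le> 2 * real t"
    using k(1) mult_right_mono[of 2 "real k" "real s"] by (simp add: t_def of_nat_diff algebra_simps)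
  also have "\<dots> < 4 * real (AT (Ktt_verts t) (Ktt_edges t))"
  proof -
    have "1 \<le> t"
      using s(1) k(1) by (simp add: t_def)
    then have "t < 2 * AT (Ktt_verts t) (Ktt_edges t)"
      using bounds(3) by linarith
    then show ?thesis by linarith
  qed
  finally have "real s * real k < 4 * real (AT (Ktt_verts t) (Ktt_edges t))" .
  moreover have "4 * M * real k \<le> real s * real k"
    using s(2) by (intro mult_right_mono) auto
  ultimately have "M * real k < real (AT (Ktt_verts t) (Ktt_edges t))"
    by linarith
  then have "M < real (AT (Ktt_verts t) (Ktt_edges t)) / real k"
    using k(1) by (simp add: field_simps)
  also have "\<dots> \<le> real (AT (Ktt_verts t) (Ktt_edges t)) / real (chi_DP (Ktt_verts t) (Ktt_edges t))"
    using bounds(1,2) by (intro divide_left_mono) auto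
  finally show ?thesis
    using simple_graph_Ktt by blast
qed

theorem corollary2:
  shows "(\<exists>S. infinite S \<and>
            (\<forall>(V, E)\<in>S. simple_graph V E \<and> chi_DP V E < AT V E) \<and>
            (\<forall>G\<in>S. \<forall>H\<in>S. G \<noteq> H \<longrightarrow> \<not> graph_iso G H)) \<and>
         (\<forall>M::real. M > 0 \<longrightarrow>
            (\<exists>V E. simple_graph V E \<and> real (AT V E) / real (chi_DP V E) > M))"
  using infinitely_many_graphs_chi_DP_less_AT AT_div_chi_DP_unbounded by blast

end
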